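(* Let $q\in(1,+\infty)$ and define $f:[1,+\infty)\to\mathbb R$ by $f(1)=-1$ and, for $y>1$, $$f(y)=-q\,\frac{y^{\frac q{q-1}}}{y^{\frac q{q-1}}-(y-1)^{\frac q{q-1}}}+(q-1)y.$$ Then: \begin{enumerate} \item $f$ is continuous and increasing, smooth on $(1,+\infty)$, and is a bijection from $[1,+\infty)$ onto $[-1,-1/2)$ with an increasing and continuous inverse. \item For $y>1$, $$f'(y)=\frac{(q-1)^2\left(y^{\frac q{q-1}}-(y-1)^{\frac q{q-1}}\right)^2-q^2y^{\frac1{q-1}}(y-1)^{\frac1{q-1}}}{(q-1)\left(y^{\frac q{q-1}}-(y-1)^{\frac q{q-1}}\right)^2},$$ and the extension of $f'$ by the value $q-1$ at $y=1$ is continuous on $[1,+\infty)$. \end{enumerate} *)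

theory Defs
  imports "HOL-Analysis.Analysis"
begin

definition fA :: "real \<Rightarrow> real \<Rightarrow> real" where
  "fA q y = (if y = 1 then -1
     else - q * (y powr (q/(q-1))) / (y powr (q/(q-1)) - (y-1) powr (q/(q-1))) + (q-1) * y)"

definition fA' :: "real \<Rightarrow> real \<Rightarrow> real" where
  "fA' q y =
     ((q-1)^2 * (y powr (q/(q-1)) - (y-1) powr (q/(q-1)))^2
        - q^2 * y powr (1/(q-1)) * (y-1) powr (1/(q-1)))
     / ((q-1) * (y powr (q/(q-1)) - (y-1) powr (q/(q-1)))^2)"

definition smooth_on :: "(real \<Rightarrow> real) \<Rightarrow> real set \<Rightarrow> bool" where
  "smooth_on g S \<longleftrightarrow> (\<exists>D :: nat \<Rightarrow> real \<Rightarrow> real. D 0 = g \<and>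
      (\<forall>k. \<forall>y\<in>S. (D k has_real_derivative D (Suc k) y) (at y)))"

end

theory Submission
  imports Defs "HOL-Real_Asymp.Real_Asymp"
begin

text \<open>
  With r = 1/(q-1) and D(y) = y^(r+1) - (y-1)^(r+1), the derivative is
  f'(y) = (q-1) - q^2 (y(y-1))^r / ((q-1) D(y)^2), so f' > 0 says (r+1) sqrt(y(y-1))^r < D(y):
  the mean of x^r over [y-1, y] exceeds its value at the geometric mean of the endpoints,
  which follows from the convexity of x^(r/2+1). An asymptotic expansion gives f(y) -> -1/2,
  so the continuous increasing f maps [1,+oo) homeomorphically onto [f(1), -1/2) = [-1, -1/2).
  Smoothness holds because f lies in the algebra generated by the powers (y - c)^a, which is
  closed under differentiation.
\<close>

lemma strict_mono_on_atLeast_if_deriv_pos: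
  fixes f f' :: "real \<Rightarrow> real"
  assumes cont: "continuous_on {a..} f"
    and deriv: "\<And>y. y > a \<Longrightarrow> (f has_real_derivative f' y) (at y)"
    and pos: "\<And>y. y > a \<Longrightarrow> f' y > 0"
  shows "strict_mono_on {a..} f"
proof (rule strict_mono_onI)
  fix x y assume xy: "x \<in> {a..}" "y \<in> {a..}" "x < y"
  show "f x < f y"
  proof (rule DERIV_pos_imp_increasing_open[OF \<open>x < y\<close>])
    fix z assume "x < z" "z < y"
    then have "z > a" using xy by simp
    then show "\<exists>d. (f has_real_derivative d) (at z) \<and> d > 0"
      using deriv pos by blast
  next
    show "continuous_on {x..y} f"
      by (rule continuous_on_subset[OF cont]) (use xy in auto)
  qed
qed

lemma image_atLeast_if_strict_mono_on_tendsto: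
  fixes f :: "real \<Rightarrow> real"
  assumes cont: "continuous_on {a..} f" and mono: "strict_mono_on {a..} f"
    and lim: "(f \<longlongrightarrow> L) at_top"
  shows "f ` {a..} = {f a..<L}"
proof (intro equalityI subsetI)
  fix u assume "u \<in> f ` {a..}"
  then obtain x where x: "x \<ge> a" "u = f x" by auto
  have "eventually (\<lambda>y. f (x + 1) \<le> f y) at_top"
    unfolding eventually_at_top_linorder using x
    by (intro exI[of _ "x + 1"] allI impI strict_mono_on_leD[OF mono]) auto
  then have "f (x + 1) \<le> L"
    using lim by (intro tendsto_lowerbound) auto
  moreover have "f a \<le> f x" "f x < f (x + 1)"
    using x by (auto intro: strict_mono_on_leD[OF mono] strict_mono_onD[OF mono])
  ultimately show "u \<in> {f a..<L}" using x by simp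
next
  fix u assume u: "u \<in> {f a..<L}"
  have "eventually (\<lambda>y. u < f y) at_top"
    using u by (intro order_tendstoD(1)[OF lim]) auto
  then obtain b where b: "b \<ge> a" "u < f b"
    unfolding eventually_at_top_linorder by (metis nle_le)
  then obtain x where "a \<le> x" "x \<le> b" "f x = u"
    using IVT'[of f a u b] u continuous_on_subset[OF cont, of "{a..b}"] by auto
  then show "u \<in> f ` {a..}" by auto
qed

lemma strict_mono_on_the_inv_into:
  fixes f :: "'a::linorder \<Rightarrow> 'b::linorder"
  assumes "strict_mono_on A f"
  shows "strict_mono_on (f ` A) (the_inv_into A f)"
  using strict_mono_on_less[OF assms]
  by (auto simp: strict_mono_on_def the_inv_into_f_f[OF strict_mono_on_imp_inj_on[OF assms]])

lemma continuous_on_the_inv_into_atLeast: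
  fixes f :: "real \<Rightarrow> real"
  assumes cont: "continuous_on {a..} f" and mono: "strict_mono_on {a..} f"
  shows "continuous_on (f ` {a..}) (the_inv_into {a..} f)"
  unfolding continuous_on_eq_continuous_within
proof
  fix u assume "u \<in> f ` {a..}"
  then obtain x where x: "x \<ge> a" "u = f x" by auto
  define b where "b = x + 1"
  have inj: "inj_on f {a..}" using mono by (rule strict_mono_on_imp_inj_on)
  have "continuous_on (f ` {a..b}) (the_inv_into {a..b} f)"
    using continuous_on_subset[OF cont] inj_on_subset[OF inj]
    by (intro continuous_on_inv_into) auto
  moreover have "the_inv_into {a..b} f v = the_inv_into {a..} f v" if "v \<in> f ` {a..b}" for v
    using that by (auto simp: the_inv_into_f_f inj inj_on_subset[OF inj])
  ultimately have "continuous_on (f ` {a..b}) (the_inv_into {a..} f)"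
    using continuous_on_cong by blast
  moreover have "u \<in> f ` {a..b}" using x by (auto simp: b_def)
  ultimately have "continuous (at u within f ` {a..b}) (the_inv_into {a..} f)"
    by (meson continuous_on_eq_continuous_within)
  moreover have "at u within f ` {a..} = at u within f ` {a..b}"
  proof (rule at_within_nhd[of _ "{..<f b}"])
    have "f y < f b \<longleftrightarrow> y < b" if "y \<ge> a" for y
      using that x strict_mono_on_less[OF mono, of y b] by (simp add: b_def)
    then show "f ` {a..} \<inter> {..<f b} - {u} = f ` {a..b} \<inter> {..<f b} - {u}"
      by auto
    show "u \<in> {..<f b}"
      using x strict_mono_onD[OF mono, of x b] by (simp add: b_def)
  qed simp_all
  ultimately show "continuous (at u within f ` {a..}) (the_inv_into {a..} f)"
    by simp
qed

lemma powr_gt_tangent_line: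
  fixes a x m :: real
  assumes a: "0 < a" and ax: "a < x" and m: "0 < m"
  shows "a powr (m + 1) + (m + 1) * a powr m * (x - a) < x powr (m + 1)"
proof -
  define H where "H z = z powr (m + 1) - (m + 1) * a powr m * (z - a)" for z
  have "strict_mono_on {a..} H"
  proof (rule strict_mono_on_atLeast_if_deriv_pos)
    show "continuous_on {a..} H"
      unfolding H_def using a by (intro continuous_intros) auto
    fix z assume "z > a"
    then show "(H has_real_derivative (m + 1) * (z powr m - a powr m)) (at z)"
      unfolding H_def using a by (auto intro!: derivative_eq_intros simp: algebra_simps)
    show "(m + 1) * (z powr m - a powr m) > 0"
      using \<open>z > a\<close> a m by (simp add: powr_less_mono2)
  qed
  then have "H a < H x" using ax by (simp add: strict_mono_onD)
  then show ?thesis by (simp add: H_def)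
qed

lemma geometric_mean_powr_lt_diff_powr:
  fixes a b r :: real
  assumes a: "0 < a" and ab: "a < b" and r: "0 < r"
  shows "(r + 1) * (b - a) * sqrt (a * b) powr r < b powr (r + 1) - a powr (r + 1)"
proof -
  define m where "m = r / 2"
  have m: "m > 0" "r = 2 * m" using r by (simp_all add: m_def)
  have sqrt_powr: "sqrt (a * z) powr r = a powr m * z powr m" if "z > 0" for z
    using a that by (simp add: m_def powr_half_sqrt[symmetric] powr_powr powr_mult)
  define G where "G z = z powr (r + 1) - (r + 1) * (z - a) * (a powr m * z powr m)" for z
  \<comment> \<open>\<open>G'\<close> is a positive multiple of the gap between \<open>z powr (m + 1)\<close> and its tangent at \<open>a\<close>\<close>
  have "strict_mono_on {a..} G"
  proof (rule strict_mono_on_atLeast_if_deriv_pos)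
    show "continuous_on {a..} G"
      unfolding G_def using a by (intro continuous_intros) auto
    fix z assume "z > a"
    then have z: "z > 0" using a by simp
    have powr_m: "z powr m = z powr (m - 1) * z"
      using z powr_add[of z "m - 1" 1] by simp
    have split: "z powr r = z powr (m - 1) * z powr (m + 1)" "z powr (m + 1) = z powr (m - 1) * z * z"
      using z powr_add[of z "m - 1" "m + 1"] powr_add[of z m 1] by (simp_all add: m(2) powr_m)
    have "a powr (1 + m) = a * a powr m"
      using a powr_add[of a 1 m] by simp
    show "(G has_real_derivative
        (r + 1) * z powr (m - 1) * (z powr (m + 1) - a powr (m + 1) - (m + 1) * a powr m * (z - a))) (at z)"
      unfolding G_def using z
      by (auto intro!: derivative_eq_intros simp: split powr_m \<open>a powr (1 + m) = a * a powr m\<close> algebra_simps)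
    show "(r + 1) * z powr (m - 1) * (z powr (m + 1) - a powr (m + 1) - (m + 1) * a powr m * (z - a)) > 0"
      using powr_gt_tangent_line[OF a \<open>z > a\<close> m(1)] r z by (intro mult_pos_pos) auto
  qed
  then have "G a < G b" using ab by (simp add: strict_mono_onD)
  moreover have "a powr m * a powr m = a powr r"
    by (simp add: m(2) powr_add[symmetric])
  ultimately show ?thesis
    using a ab by (simp add: G_def sqrt_powr algebra_simps)
qed

lemma smooth_on_if_deriv_closed:
  assumes "f \<in> C"
    and closed: "\<And>g. g \<in> C \<Longrightarrow> \<exists>g'\<in>C. \<forall>y\<in>S. (g has_real_derivative g' y) (at y)"
  shows "smooth_on f S"
proof -
  define deriv_in where "deriv_in g = (SOME g'. g' \<in> C \<and> (\<forall>y\<in>S. (g has_real_derivative g' y) (at y)))" for g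
  have deriv_in: "deriv_in g \<in> C" "\<forall>y\<in>S. (g has_real_derivative deriv_in g y) (at y)"
    if "g \<in> C" for g
    using someI_ex[OF closed[OF that, unfolded Bex_def]] by (simp_all add: deriv_in_def)
  define D where "D k = (deriv_in ^^ k) f" for k
  have D_Suc: "D (Suc k) = deriv_in (D k)" for k by (simp add: D_def)
  have "D k \<in> C" for k
    by (induction k) (simp_all add: D_def \<open>f \<in> C\<close> deriv_in(1))
  then show ?thesis
    unfolding smooth_on_def using D_Suc deriv_in(2) by (intro exI[of _ D]) (simp add: D_def)
qed

text \<open>Only values on \<open>(1,\<infinity>)\<close> matter, where each \<open>(y - c) powr a\<close> with \<open>c \<le> 1\<close> is smooth.\<close>

inductive_set powr_algebra :: "(real \<Rightarrow> real) set" where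
  const: "(\<lambda>y. c) \<in> powr_algebra"
| shifted_powr: "c \<le> 1 \<Longrightarrow> (\<lambda>y. (y - c) powr a) \<in> powr_algebra"
| add: "f \<in> powr_algebra \<Longrightarrow> g \<in> powr_algebra \<Longrightarrow> (\<lambda>y. f y + g y) \<in> powr_algebra"
| mult: "f \<in> powr_algebra \<Longrightarrow> g \<in> powr_algebra \<Longrightarrow> (\<lambda>y. f y * g y) \<in> powr_algebra"
| inverse: "f \<in> powr_algebra \<Longrightarrow> (\<forall>y>1. f y \<noteq> 0) \<Longrightarrow> (\<lambda>y. inverse (f y)) \<in> powr_algebra"
| cong: "f \<in> powr_algebra \<Longrightarrow> (\<forall>y>1. g y = f y) \<Longrightarrow> g \<in> powr_algebra"

lemma powr_algebra_deriv:
  assumes "f \<in> powr_algebra"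
  shows "\<exists>f'\<in>powr_algebra. \<forall>y\<in>{1<..}. (f has_real_derivative f' y) (at y)"
  using assms
proof (induction rule: powr_algebra.induct)
  case (const c)
  show ?case by (intro bexI[of _ "\<lambda>y. 0"] powr_algebra.const) auto
next
  case (shifted_powr c a)
  show ?case
    using shifted_powr
    by (intro bexI[of _ "\<lambda>y. a * (y - c) powr (a - 1)"] powr_algebra.mult powr_algebra.const
        powr_algebra.shifted_powr)
       (auto intro!: derivative_eq_intros)
next
  case (add f g)
  then obtain f' g' where "f' \<in> powr_algebra" "g' \<in> powr_algebra"
    "\<forall>y\<in>{1<..}. (f has_real_derivative f' y) (at y)" "\<forall>y\<in>{1<..}. (g has_real_derivative g' y) (at y)"
    by blast
  then show ?case
    by (intro bexI[of _ "\<lambda>y. f' y + g' y"] powr_algebra.add) (auto intro: DERIV_add)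
next
  case (mult f g)
  then obtain f' g' where "f' \<in> powr_algebra" "g' \<in> powr_algebra"
    "\<forall>y\<in>{1<..}. (f has_real_derivative f' y) (at y)" "\<forall>y\<in>{1<..}. (g has_real_derivative g' y) (at y)"
    by blast
  then show ?case
    using mult.hyps
    by (intro bexI[of _ "\<lambda>y. f' y * g y + g' y * f y"] powr_algebra.add powr_algebra.mult)
       (auto intro: DERIV_mult)
next
  case (inverse f)
  then obtain f' where f': "f' \<in> powr_algebra" "\<forall>y\<in>{1<..}. (f has_real_derivative f' y) (at y)"
    by blast
  have "((\<lambda>y. inverse (f y)) has_real_derivative - 1 * (f' y * (inverse (f y) * inverse (f y)))) (at y)"
    if "y > 1" for y
    using DERIV_inverse_fun[of f "f' y" y] f'(2) inverse.hyps(2) that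
    by (simp add: power2_eq_square)
  then show ?case
    using f'(1) inverse.hyps
    by (intro bexI[of _ "\<lambda>y. - 1 * (f' y * (inverse (f y) * inverse (f y)))"]
        powr_algebra.mult powr_algebra.const powr_algebra.inverse) auto
next
  case (cong f g)
  from cong.IH obtain f' where f': "f' \<in> powr_algebra" "\<forall>y\<in>{1<..}. (f has_real_derivative f' y) (at y)"
    by blast
  have "(g has_real_derivative f' y) (at y)" if "y > 1" for y
  proof (rule has_field_derivative_transform_within_open[of f _ y "{1<..}"])
    show "(f has_real_derivative f' y) (at y)" using f'(2) that by simp
    show "f x = g x" if "x \<in> {1<..}" for x using cong.hyps(2) that by simp
  qed (use that in simp_all)
  with f'(1) show ?case by blast
qed

definition fA_denom :: "real \<Rightarrow> real \<Rightarrow> real" where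
  "fA_denom q y = y powr (q / (q - 1)) - (y - 1) powr (q / (q - 1))"

lemma fA_denom_pos:
  fixes q y :: real
  assumes "q > 1" "y \<ge> 1"
  shows "fA_denom q y > 0"
  using assms by (simp add: fA_denom_def powr_less_mono2)

lemma continuous_on_fA_denom:
  fixes q :: real
  assumes "q > 1"
  shows "continuous_on {1..} (fA_denom q)"
  unfolding fA_denom_def using assms
  by (intro continuous_intros continuous_on_powr') auto

lemma fA_eq_denom:
  fixes q y :: real
  assumes "q > 1" "y \<ge> 1"
  shows "fA q y = - q * y powr (q / (q - 1)) / fA_denom q y + (q - 1) * y"
  \<comment> \<open>at \<open>y = 1\<close> too, since \<open>0 powr p = 0\<close>\<close>
  using assms by (auto simp: fA_def fA_denom_def)

lemma continuous_on_fA: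
  fixes q :: real
  assumes q: "q > 1"
  shows "continuous_on {1..} (fA q)"
proof -
  have "continuous_on {1..} (\<lambda>y. - q * y powr (q / (q - 1)) / fA_denom q y + (q - 1) * y)"
    using q fA_denom_pos[OF q] continuous_on_fA_denom[OF q]
    by (intro continuous_intros continuous_on_powr') (auto simp: less_imp_neq[symmetric])
  then show ?thesis
    by (rule continuous_on_cong[THEN iffD1, OF refl, rotated]) (simp add: fA_eq_denom[OF q])
qed

lemma fA'_eq_denom:
  fixes q y :: real
  assumes q: "q > 1" and y: "y \<ge> 1"
  shows "fA' q y = (q - 1) - q\<^sup>2 * (y * (y - 1)) powr (1 / (q - 1)) / ((q - 1) * (fA_denom q y)\<^sup>2)"
proof -
  have "fA_denom q y \<noteq> 0" "q - 1 \<noteq> 0" using fA_denom_pos[OF q y] q by auto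
  moreover have "(y * (y - 1)) powr (1 / (q - 1)) = y powr (1 / (q - 1)) * (y - 1) powr (1 / (q - 1))"
    using y by (simp add: powr_mult)
  ultimately show ?thesis
    by (simp add: fA'_def fA_denom_def[symmetric] field_simps) (simp add: power2_eq_square algebra_simps)
qed

lemma fA'_one: "q > 1 \<Longrightarrow> fA' q 1 = q - 1"
  by (simp add: fA'_eq_denom)

lemma continuous_on_fA':
  fixes q :: real
  assumes q: "q > 1"
  shows "continuous_on {1..} (fA' q)"
proof -
  have "(q - 1) * (fA_denom q y)\<^sup>2 \<noteq> 0" if "y \<in> {1..}" for y
    using q fA_denom_pos[OF q, of y] that by simp
  then have "continuous_on {1..} (\<lambda>y. (q - 1) - q\<^sup>2 * (y * (y - 1)) powr (1 / (q - 1)) / ((q - 1) * (fA_denom q y)\<^sup>2))"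
    using q continuous_on_fA_denom[OF q]
    by (intro continuous_intros continuous_on_powr') auto
  then show ?thesis
    by (rule continuous_on_cong[THEN iffD1, OF refl, rotated]) (simp add: fA'_eq_denom[OF q])
qed

lemma has_real_derivative_fA:
  fixes q y :: real
  assumes q: "q > 1" and y: "y > 1"
  shows "(fA q has_real_derivative fA' q y) (at y)"
proof -
  define r where "r = 1 / (q - 1)"
  have p: "q / (q - 1) = r + 1" and "q * (r + 1) = q\<^sup>2 / (q - 1)"
    using q by (simp_all add: r_def field_simps power2_eq_square)
  have powr_p: "y powr (r + 1) = y * y powr r" "(y - 1) powr (r + 1) = (y - 1) * (y - 1) powr r"
    using y by (simp_all add: powr_add)
  define D where "D = y * y powr r - (y - 1) * (y - 1) powr r"
  have "D = fA_denom q y"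
    by (simp add: fA_denom_def p powr_p D_def)
  then have "D \<noteq> 0" using fA_denom_pos[OF q, of y] y by simp
  have "fA' q y = q - 1 - q * (r + 1) * (y powr r * (y - 1) powr r) / (D * D)"
    using fA'_eq_denom[OF q, of y] y \<open>D = fA_denom q y\<close> \<open>q * (r + 1) = q\<^sup>2 / (q - 1)\<close>
    by (simp add: r_def[symmetric] powr_mult power2_eq_square)
  \<comment> \<open>the numerator produced by the quotient rule\<close>
  moreover have "(r + 1) * y powr r * q * D - q * (y * y powr r) * ((r + 1) * y powr r - (r + 1) * (y - 1) powr r)
      = q * (r + 1) * (y powr r * (y - 1) powr r)"
    by (simp add: D_def algebra_simps)
  ultimately have "((\<lambda>x. - q * x powr (r + 1) / (x powr (r + 1) - (x - 1) powr (r + 1)) + (q - 1) * x)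
      has_real_derivative fA' q y) (at y)"
    using y \<open>D \<noteq> 0\<close> by (auto intro!: derivative_eq_intros simp: powr_p D_def[symmetric])
  then show ?thesis
    by (rule has_field_derivative_transform_within_open[where S = "{1<..}"])
       (use y in \<open>auto simp: fA_def p\<close>)
qed

lemma fA'_pos:
  fixes q y :: real
  assumes q: "q > 1" and y: "y > 1"
  shows "fA' q y > 0"
proof -
  define r where "r = 1 / (q - 1)"
  have "r > 0" "(q - 1) * (r + 1) = q" "q / (q - 1) = r + 1"
    using q by (simp_all add: r_def field_simps)
  define G where "G = sqrt ((y - 1) * y) powr r"
  have "(r + 1) * G < fA_denom q y"
    using geometric_mean_powr_lt_diff_powr[of "y - 1" y r] y \<open>r > 0\<close> \<open>q / (q - 1) = r + 1\<close>
    by (simp add: G_def fA_denom_def)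
  then have "(q - 1) * ((r + 1) * G) < (q - 1) * fA_denom q y"
    using q by simp
  then have "q * G < (q - 1) * fA_denom q y"
    using \<open>(q - 1) * (r + 1) = q\<close> by (simp add: mult.assoc[symmetric])
  have "G\<^sup>2 = (y * (y - 1)) powr r"
    using y by (simp add: G_def power2_eq_square powr_mult[symmetric] mult.commute)
  then have "q\<^sup>2 * (y * (y - 1)) powr r = (q * G)\<^sup>2"
    by (simp add: power_mult_distrib)
  also have "\<dots> < ((q - 1) * fA_denom q y)\<^sup>2"
    using \<open>q * G < (q - 1) * fA_denom q y\<close> q by (intro power_strict_mono) (auto simp: G_def)
  also have "\<dots> = (q - 1) * ((q - 1) * (fA_denom q y)\<^sup>2)"
    by (simp add: power_mult_distrib power2_eq_square)
  finally have "q\<^sup>2 * (y * (y - 1)) powr r < (q - 1) * ((q - 1) * (fA_denom q y)\<^sup>2)" .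
  moreover have "(q - 1) * (fA_denom q y)\<^sup>2 > 0"
    using q fA_denom_pos[OF q, of y] y by simp
  ultimately have "q\<^sup>2 * (y * (y - 1)) powr r / ((q - 1) * (fA_denom q y)\<^sup>2) < q - 1"
    by (simp add: pos_divide_less_eq)
  then show ?thesis
    using fA'_eq_denom[OF q, of y] y by (simp add: r_def)
qed

lemma strict_mono_on_fA:
  fixes q :: real
  assumes "q > 1"
  shows "strict_mono_on {1..} (fA q)"
  using assms continuous_on_fA has_real_derivative_fA fA'_pos
  by (intro strict_mono_on_atLeast_if_deriv_pos)

lemma tendsto_fA_at_top:
  fixes q :: real
  assumes q: "q > 1"
  shows "(fA q \<longlongrightarrow> -1/2) at_top"
proof -
  have "((\<lambda>y. - q * y powr (q / (q - 1)) / (y powr (q / (q - 1)) - (y - 1) powr (q / (q - 1)))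
      + (q - 1) * y) \<longlongrightarrow> -1/2) at_top"
    using q by real_asymp (simp add: field_simps)
  moreover have "eventually (\<lambda>y. - q * y powr (q / (q - 1)) / (y powr (q / (q - 1)) - (y - 1) powr (q / (q - 1)))
      + (q - 1) * y = fA q y) at_top"
    using eventually_gt_at_top[of 1] by eventually_elim (simp add: fA_def)
  ultimately show ?thesis
    by (rule Lim_transform_eventually)
qed

lemma image_fA:
  fixes q :: real
  assumes "q > 1"
  shows "fA q ` {1..} = {-1..<-1/2}"
  using image_atLeast_if_strict_mono_on_tendsto[OF continuous_on_fA strict_mono_on_fA tendsto_fA_at_top]
    assms by (simp add: fA_def)

lemma smooth_on_fA:
  fixes q :: real
  assumes q: "q > 1"
  shows "smooth_on (fA q) {1<..}"
proof (rule smooth_on_if_deriv_closed[OF _ powr_algebra_deriv])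
  define p where "p = q / (q - 1)"
  have "(y - 0) powr p + - 1 * (y - 1) powr p \<noteq> 0" if "y > 1" for y
    using fA_denom_pos[OF q, of y] that by (simp add: fA_denom_def p_def)
  \<comment> \<open>the powers are written as \<open>(y - 0) powr _\<close> so that the generator \<open>shifted_powr\<close> applies\<close>
  then have "(\<lambda>y. - q * (y - 0) powr p * inverse ((y - 0) powr p + - 1 * (y - 1) powr p)
      + (q - 1) * (y - 0) powr 1) \<in> powr_algebra"
    by (intro powr_algebra.add powr_algebra.mult powr_algebra.const
        powr_algebra.shifted_powr powr_algebra.inverse) auto
  then show "fA q \<in> powr_algebra"
    by (rule powr_algebra.cong) (auto simp: fA_def p_def divide_inverse)
qed

theorem lemmaA1:
  fixes q :: real
  assumes "q > 1"
  shows "continuous_on {1..} (fA q)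
       \<and> strict_mono_on {1..} (fA q)
       \<and> smooth_on (fA q) {1<..}
       \<and> bij_betw (fA q) {1..} {-1..<-1/2}
       \<and> strict_mono_on {-1..<-1/2} (the_inv_into {1..} (fA q))
       \<and> continuous_on {-1..<-1/2} (the_inv_into {1..} (fA q))
       \<and> (\<forall>y>1. (fA q has_real_derivative fA' q y) (at y))
       \<and> continuous_on {1..} (\<lambda>y. if y = 1 then q - 1 else fA' q y)"
proof -
  have cont: "continuous_on {1..} (fA q)" and mono: "strict_mono_on {1..} (fA q)"
    using assms by (simp_all add: continuous_on_fA strict_mono_on_fA)
  have image: "fA q ` {1..} = {-1..<-1/2}"
    using assms by (rule image_fA)
  have "bij_betw (fA q) {1..} {-1..<-1/2}"
    using image strict_mono_on_imp_inj_on[OF mono] by (simp add: bij_betw_def)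
  moreover have "strict_mono_on {-1..<-1/2} (the_inv_into {1..} (fA q))"
    using strict_mono_on_the_inv_into[OF mono] by (simp add: image)
  moreover have "continuous_on {-1..<-1/2} (the_inv_into {1..} (fA q))"
    using continuous_on_the_inv_into_atLeast[OF cont mono] by (simp add: image)
  moreover have "continuous_on {1..} (\<lambda>y. if y = 1 then q - 1 else fA' q y)"
    using continuous_on_fA'[OF assms]
    by (rule continuous_on_cong[THEN iffD1, OF refl, rotated]) (simp add: fA'_one[OF assms])
  ultimately show ?thesis
    using assms cont mono smooth_on_fA has_real_derivative_fA by simp
qed

end
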